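(* Let $G^\sigma$ be a connected oriented graph of order $n\in\{2,3,4\}$ with $sr(G^\sigma)=2$. Then: (1) if $n=2$, $G^\sigma$ is the path $P_2^\sigma$ with arbitrary orientation; (2) if $n=3$, the underlying graph is $K_3$ or $P_3$ (with any orientation of the edges); (3) if $n=4$, $G^\sigma$ is one of: (a) an evenly-oriented cycle $C_4^\sigma$; (b) an orientation (arbitrary) of the star $K_{1,3}$; (c) an evenly-oriented orientation of $K_{1,1,2}$ (i.e. an orientation of $K_4$ minus an edge in which every cycle of length $4$ is evenly-oriented).
   Context: An oriented graph $G^\sigma$ is a simple graph $G$ (underlying graph) together with an orientation of each edge. Its skew-adjacency matrix $S(G^\sigma)=(s_{ij})$ has $s_{ij}=1$ if there is an arc from $v_i$ to $v_j$, $s_{ij}=-1$ if there is an arc from $v_j$ to $v_i$, and $0$ otherwise; the skew-rank $sr(G^\sigma)$ is the rank of $S(G^\sigma)$. For an even cycle $u_1\cdots u_ku_1$, its sign is the sign of $\prod_{i=1}^k s_{u_iu_{i+1}}$ ($u_{k+1}=u_1$); the cycle is evenly-oriented if this sign is positive. An oriented graph is evenly-oriented if every even cycle in it is evenly-oriented. $P_n$, $C_n$, $K_n$ denote path, cycle, complete graph on $n$ vertices; $K_{1,1,2}$ is the complete tripartite graph with parts of sizes $1,1,2$. *)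

theory Defs
  imports "HOL-Analysis.Analysis"
begin

text \<open>An oriented graph on the finite vertex type 'n (vertex set = UNIV) is given by an
arc relation A: A x y means there is an arc from x to y.\<close>

definition oriented_graph :: "('n \<Rightarrow> 'n \<Rightarrow> bool) \<Rightarrow> bool" where
  "oriented_graph A \<longleftrightarrow> (\<forall>x. \<not> A x x) \<and> (\<forall>x y. A x y \<longrightarrow> \<not> A y x)"

definition underlying :: "('n \<Rightarrow> 'n \<Rightarrow> bool) \<Rightarrow> 'n \<Rightarrow> 'n \<Rightarrow> bool" where
  "underlying A x y \<longleftrightarrow> A x y \<or> A y x"

definition connected_graph :: "('n \<Rightarrow> 'n \<Rightarrow> bool) \<Rightarrow> bool" where
  "connected_graph E \<longleftrightarrow> (\<forall>x y. E\<^sup>*\<^sup>* x y)"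

definition skew_entry :: "('n \<Rightarrow> 'n \<Rightarrow> bool) \<Rightarrow> 'n \<Rightarrow> 'n \<Rightarrow> real" where
  "skew_entry A x y = (if A x y then 1 else if A y x then -1 else 0)"

definition skew_adj :: "('n::finite \<Rightarrow> 'n \<Rightarrow> bool) \<Rightarrow> real^'n^'n" where
  "skew_adj A = (\<chi> i j. skew_entry A i j)"

definition skew_rank :: "('n::finite \<Rightarrow> 'n \<Rightarrow> bool) \<Rightarrow> nat" where
  "skew_rank A = rank (skew_adj A)"

definition is_cycle :: "('n \<Rightarrow> 'n \<Rightarrow> bool) \<Rightarrow> 'n list \<Rightarrow> bool" where
  "is_cycle E us \<longleftrightarrow> length us \<ge> 3 \<and> distinct us \<and>
     (\<forall>i < length us. E (us ! i) (us ! ((i + 1) mod length us)))"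

definition cycle_sign :: "('n \<Rightarrow> 'n \<Rightarrow> bool) \<Rightarrow> 'n list \<Rightarrow> real" where
  "cycle_sign A us = (\<Prod>i < length us. skew_entry A (us ! i) (us ! ((i + 1) mod length us)))"

definition evenly_oriented :: "('n \<Rightarrow> 'n \<Rightarrow> bool) \<Rightarrow> bool" where
  "evenly_oriented A \<longleftrightarrow>
     (\<forall>us. is_cycle (underlying A) us \<and> even (length us) \<longrightarrow> cycle_sign A us > 0)"

definition path_graph :: "nat \<Rightarrow> nat \<Rightarrow> nat \<Rightarrow> bool" where
  "path_graph k i j \<longleftrightarrow> i < k \<and> j < k \<and> (j = i + 1 \<or> i = j + 1)"

definition cycle_graph :: "nat \<Rightarrow> nat \<Rightarrow> nat \<Rightarrow> bool" where
  "cycle_graph k i j \<longleftrightarrow> path_graph k i j \<or>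
     (i \<noteq> j \<and> {i, j} = {0, k - 1})"

definition complete_graph :: "nat \<Rightarrow> nat \<Rightarrow> nat \<Rightarrow> bool" where
  "complete_graph k i j \<longleftrightarrow> i < k \<and> j < k \<and> i \<noteq> j"

definition star_K13 :: "nat \<Rightarrow> nat \<Rightarrow> bool" where
  "star_K13 i j \<longleftrightarrow> i < 4 \<and> j < 4 \<and> i \<noteq> j \<and> (i = 0 \<or> j = 0)"

text \<open>K_{1,1,2}: parts {0}, {1}, {2,3}; i.e. K_4 minus the edge 23.\<close>
definition K112 :: "nat \<Rightarrow> nat \<Rightarrow> bool" where
  "K112 i j \<longleftrightarrow> complete_graph 4 i j \<and> {i, j} \<noteq> {2, 3}"

definition iso_to :: "('n \<Rightarrow> 'n \<Rightarrow> bool) \<Rightarrow> nat \<Rightarrow> (nat \<Rightarrow> nat \<Rightarrow> bool) \<Rightarrow> bool" where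
  "iso_to E k H \<longleftrightarrow> (\<exists>f. bij_betw f (UNIV :: 'n set) {0..<k} \<and>
      (\<forall>x y. E x y \<longleftrightarrow> H (f x) (f y)))"

end

theory Submission
  imports Defs
begin

text \<open>A connected graph on two or three vertices is \<open>P\<^sub>2\<close>, \<open>P\<^sub>3\<close> or \<open>K\<^sub>3\<close>, whatever its
  skew-rank. On four vertices a skew-rank below four makes the skew-adjacency matrix singular,
  so its Pfaffian \<open>s\<^sub>1\<^sub>2 s\<^sub>3\<^sub>4 - s\<^sub>1\<^sub>3 s\<^sub>2\<^sub>4 + s\<^sub>1\<^sub>4 s\<^sub>2\<^sub>3\<close> vanishes. Its three terms are the signed
  weights, in \<open>{-1, 0, 1}\<close>, of the three perfect matchings of \<open>K\<^sub>4\<close>. Either all of them vanish,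
  and a graph without isolated vertices and without perfect matching is the star \<open>K\<^sub>1\<^sub>,\<^sub>3\<close>; or
  exactly two of them cancel. Then the union of these two matchings is a 4-cycle of positive
  sign, and at most one chord of the third matching is present, giving \<open>C\<^sub>4\<close> or \<open>K\<^sub>1\<^sub>,\<^sub>1\<^sub>,\<^sub>2\<close>.
  In both graphs that 4-cycle is the only even cycle, so the orientation is even.\<close>

lemma iso_to_by_enumeration:
  assumes "distinct xs" and "set xs = UNIV" and "length xs = k"
    and "\<And>i j. i < k \<Longrightarrow> j < k \<Longrightarrow> E (xs ! i) (xs ! j) \<longleftrightarrow> H i j"
  shows "iso_to E k H"
proof -
  have "bij_betw ((!) xs) {0..<k} UNIV"
    using bij_betw_nth[OF assms(1)] assms(2,3) by (simp add: atLeast0LessThan)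
  then have "bij_betw (inv_into {0..<k} ((!) xs)) UNIV {0..<k}"
    and "\<And>x. xs ! inv_into {0..<k} ((!) xs) x = x"
    by (auto intro: bij_betw_inv_into bij_betw_inv_into_right)
  then show ?thesis
    unfolding iso_to_def using assms(4) by (metis atLeastLessThan_iff bij_betwE UNIV_I)
qed

lemma card_4_obtain: "card S = 4 \<Longrightarrow> \<exists>a b c d. S = {a, b, c, d} \<and> distinct [a, b, c, d]"
  by (auto simp: card_Suc_eq numeral_eq_Suc)

lemma symp_iff: "symp E \<Longrightarrow> E x y \<longleftrightarrow> E y x"
  by (blast dest: sympD)

lemma connected_graph_neighbour:
  fixes E :: "'n::finite \<Rightarrow> 'n \<Rightarrow> bool"
  assumes "connected_graph E" and "CARD('n) \<ge> 2"
  shows "\<exists>y. E x y"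
proof -
  have "UNIV \<noteq> {x}"
  proof
    assume "UNIV = {x}"
    then have "CARD('n) = card {x}" by (rule arg_cong)
    with assms(2) show False by simp
  qed
  then obtain y where "y \<noteq> x" by blast
  with assms(1) show ?thesis
    by (metis connected_graph_def converse_rtranclpE)
qed

lemma two_vertex_graph_iso_path:
  fixes E :: "'n::finite \<Rightarrow> 'n \<Rightarrow> bool"
  assumes "symp E" and "irreflp E" and "\<And>x. \<exists>y. E x y" and "CARD('n) = 2"
  shows "iso_to E 2 (path_graph 2)"
proof -
  obtain a b :: 'n where U: "UNIV = {a, b}" and "a \<noteq> b"
    using assms(4) card_2_iff by metis
  moreover have "E a b"
  proof -
    obtain v where "E a v" using assms(3) by blast
    moreover have "v \<in> {a, b}" using U by blast
    ultimately show ?thesis using assms(2) by (auto dest: irreflpD)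
  qed
  ultimately show ?thesis
    using assms(1,2)
    by (intro iso_to_by_enumeration[of "[a, b]"])
       (auto simp: path_graph_def less_Suc_eq numeral_eq_Suc irreflpD dest: sympD)
qed

lemma three_vertex_graph_iso_triangle_or_path:
  fixes E :: "'n::finite \<Rightarrow> 'n \<Rightarrow> bool"
  assumes sym: "symp E" and irr: "irreflp E" and nbr: "\<And>x. \<exists>y. E x y" and "CARD('n) = 3"
  shows "iso_to E 3 (complete_graph 3) \<or> iso_to E 3 (path_graph 3)"
proof -
  have E_iff: "E x y \<longleftrightarrow> E y x" for x y using symp_iff[OF sym] .
  have path: "iso_to E 3 (path_graph 3)"
    if U: "UNIV = {x, y, z}" and "distinct [x, y, z]" and "\<not> E x y" for x y z
  proof -
    have cases: "w = x \<or> w = y \<or> w = z" for w using U by blast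
    obtain v w where "E x v" "E y w" using nbr by blast
    then have "E x z" "E y z"
      using cases[of v] cases[of w] that(3) irreflpD[OF irr] E_iff by metis+
    then show ?thesis
      using that irr E_iff
      by (intro iso_to_by_enumeration[of "[x, z, y]"])
         (auto simp: path_graph_def less_Suc_eq numeral_eq_Suc irreflpD)
  qed
  obtain a b c :: 'n where U: "UNIV = {a, b, c}" and "distinct [a, b, c]"
    using assms(4) card_3_iff by (metis distinct_length_2_or_more distinct_singleton)
  then show ?thesis
  proof (cases "E a b \<and> E a c \<and> E b c")
    case True
    then have "iso_to E 3 (complete_graph 3)"
      using U \<open>distinct [a, b, c]\<close> irr E_iff
      by (intro iso_to_by_enumeration[of "[a, b, c]"])
         (auto simp: complete_graph_def less_Suc_eq numeral_eq_Suc irreflpD)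
    then show ?thesis ..
  next
    case False
    then have "iso_to E 3 (path_graph 3)"
      using path[of a b c] path[of a c b] path[of b c a] U \<open>distinct [a, b, c]\<close>
      by (auto simp: insert_commute)
    then show ?thesis ..
  qed
qed

lemma cycle_graph_4_iff:
  "cycle_graph 4 i j \<longleftrightarrow> i < 4 \<and> j < 4 \<and> (j = i + 1 \<or> i = j + 1 \<or> {i, j} = {0, 3})"
  unfolding cycle_graph_def path_graph_def doubleton_eq_iff by force

lemma K112_iff:
  "K112 i j \<longleftrightarrow> i < 4 \<and> j < 4 \<and> i \<noteq> j \<and> {i, j} \<noteq> {2, 3}"
  unfolding K112_def complete_graph_def by auto

lemma all_less_four: "(\<forall>i<4::nat. P i) \<longleftrightarrow> P 0 \<and> P 1 \<and> P 2 \<and> P 3"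
  by (auto simp: less_Suc_eq numeral_eq_Suc)

lemma iso_to_4_by_enumeration:
  assumes "UNIV = {v0, v1, v2, v3}" and "distinct [v0, v1, v2, v3]"
    and "\<forall>i<4. \<forall>j<4. E ([v0, v1, v2, v3] ! i) ([v0, v1, v2, v3] ! j) \<longleftrightarrow> H i j"
  shows "iso_to E 4 H"
  using assms by (intro iso_to_by_enumeration[of "[v0, v1, v2, v3]"]) auto

lemma star_iso_K13:
  assumes "symp E" and "irreflp E" and "UNIV = {c, x, y, z}" and "distinct [c, x, y, z]"
    and "E c x" and "E c y" and "E c z" and "\<not> E x y" and "\<not> E x z" and "\<not> E y z"
  shows "iso_to E 4 star_K13"
  using assms
  by (intro iso_to_4_by_enumeration[of c x y z])
     (simp_all add: all_less_four star_K13_def doubleton_eq_iff insert_commute irreflpD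
        symp_iff[OF assms(1)])

lemma four_cycle_iso_C4:
  assumes "symp E" and "irreflp E" and "UNIV = {p, q, r, t}" and "distinct [p, q, r, t]"
    and "E p q" and "E q r" and "E r t" and "E t p" and "\<not> E p r" and "\<not> E q t"
  shows "iso_to E 4 (cycle_graph 4)"
  using assms
  by (intro iso_to_4_by_enumeration[of p q r t])
     (simp_all add: all_less_four cycle_graph_4_iff doubleton_eq_iff insert_commute irreflpD
        symp_iff[OF assms(1)])

lemma four_cycle_with_chord_iso_K112:
  assumes "symp E" and "irreflp E" and "UNIV = {p, q, r, t}" and "distinct [p, q, r, t]"
    and "E p q" and "E q r" and "E r t" and "E t p" and "\<not> E p r" and "E q t"
  shows "iso_to E 4 K112"
  using assms
  by (intro iso_to_4_by_enumeration[of q t p r])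
     (auto simp: all_less_four K112_iff doubleton_eq_iff insert_commute irreflpD
        symp_iff[OF assms(1)])

lemma no_perfect_matching_through_edge_iso_star:
  assumes sym: "symp E" and irr: "irreflp E" and nbr: "\<And>x. \<exists>y. E x y"
    and U: "UNIV = {x, y, u, v}" and dist: "distinct [x, y, u, v]" and "E x y"
    and "\<not> (E x u \<and> E y v)" and "\<not> (E x v \<and> E y u)" and "\<not> E u v"
  shows "iso_to E 4 star_K13"
proof -
  have E_iff: "E a b \<longleftrightarrow> E b a" for a b using symp_iff[OF sym] .
  have in_U: "w = x \<or> w = y \<or> w = u \<or> w = v" for w using U by blast
  have "E u x \<or> E u y" "E v x \<or> E v y"
    using nbr[of u] nbr[of v] in_U irreflpD[OF irr] E_iff \<open>\<not> E u v\<close> by metis+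
  then consider "E x u" "E x v" | "E y u" "E y v"
    using assms(7,8) E_iff by blast
  then show ?thesis
  proof cases
    case 1
    then show ?thesis
      using star_iso_K13[OF sym irr U dist] \<open>E x y\<close> assms(7-9) E_iff by blast
  next
    case 2
    moreover have "UNIV = {y, x, u, v}" "distinct [y, x, u, v]"
      using U dist by auto
    ultimately show ?thesis
      using star_iso_K13[OF sym irr, of y x u v] \<open>E x y\<close> assms(7-9) E_iff by blast
  qed
qed

lemma no_perfect_matching_iso_star:
  assumes sym: "symp E" and irr: "irreflp E" and nbr: "\<And>x. \<exists>y. E x y"
    and U: "UNIV = {a, b, c, d}" and dist: "distinct [a, b, c, d]"
    and "\<not> (E a b \<and> E c d)" and "\<not> (E a c \<and> E b d)" and "\<not> (E a d \<and> E b c)"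
  shows "iso_to E 4 star_K13"
proof -
  have E_iff: "E x y \<longleftrightarrow> E y x" for x y using symp_iff[OF sym] .
  have "w = a \<or> w = b \<or> w = c \<or> w = d" for w using U by blast
  then consider "E a b" | "E a c" | "E a d"
    using nbr[of a] irreflpD[OF irr] by metis
  then show ?thesis
  proof cases
    case 1
    then show ?thesis
      using no_perfect_matching_through_edge_iso_star[OF sym irr nbr U dist] assms(6-8) E_iff
      by blast
  next
    case 2
    moreover have "UNIV = {a, c, b, d}" "distinct [a, c, b, d]"
      using U dist by auto
    ultimately show ?thesis
      using no_perfect_matching_through_edge_iso_star[OF sym irr nbr, of a c b d] assms(6-8) E_iff
      by blast
  next
    case 3
    moreover have "UNIV = {a, d, b, c}" "distinct [a, d, b, c]"
      using U dist by auto
    ultimately show ?thesis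
      using no_perfect_matching_through_edge_iso_star[OF sym irr nbr, of a d b c] assms(6-8) E_iff
      by blast
  qed
qed

lemma skew_entry_antisym: "oriented_graph A \<Longrightarrow> skew_entry A y x = - skew_entry A x y"
  by (auto simp: skew_entry_def oriented_graph_def)

lemma skew_entry_cases: "skew_entry A x y \<in> {-1, 0, 1}"
  by (auto simp: skew_entry_def)

lemma underlying_iff_skew_entry: "underlying A x y \<longleftrightarrow> skew_entry A x y \<noteq> 0"
  by (auto simp: skew_entry_def underlying_def)

lemma symp_underlying: "symp (underlying A)"
  by (auto simp: underlying_def intro: sympI)

lemma irreflp_underlying: "oriented_graph A \<Longrightarrow> irreflp (underlying A)"
  by (auto simp: underlying_def oriented_graph_def intro: irreflpI)

lemma evenly_orientedI_four_vertices:
  fixes A :: "'n \<Rightarrow> 'n \<Rightarrow> bool"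
  assumes "UNIV = {a, b, c, d :: 'n}"
    and "\<And>p q r t. distinct [p, q, r, t] \<Longrightarrow> skew_entry A p q \<noteq> 0 \<Longrightarrow> skew_entry A q r \<noteq> 0
       \<Longrightarrow> skew_entry A r t \<noteq> 0 \<Longrightarrow> skew_entry A t p \<noteq> 0
       \<Longrightarrow> skew_entry A p q * skew_entry A q r * skew_entry A r t * skew_entry A t p > 0"
  shows "evenly_oriented A"
  unfolding evenly_oriented_def
proof (intro allI impI)
  fix us :: "'n list"
  assume cyc: "is_cycle (underlying A) us \<and> even (length us)"
  then have "distinct us" and "length us \<ge> 3"
    by (auto simp: is_cycle_def)
  have "set us \<subseteq> set [a, b, c, d]"
    using assms(1) by auto
  then have "length us \<le> 4"
    using card_mono[of "set [a, b, c, d]" "set us"] card_length[of "[a, b, c, d]"]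
      distinct_card[OF \<open>distinct us\<close>] by simp
  with \<open>length us \<ge> 3\<close> have "length us = 3 \<or> length us = 4" by linarith
  with cyc have "length us = 4" by auto
  then have "us = [us ! 0, us ! 1, us ! 2, us ! 3]"
    by (intro nth_equalityI) (auto simp: less_Suc_eq numeral_eq_Suc)
  then obtain p q r t where us: "us = [p, q, r, t]" by blast
  have "\<forall>i<4. underlying A (us ! i) (us ! ((i + 1) mod 4))"
    using cyc \<open>length us = 4\<close> by (simp add: is_cycle_def)
  then have "underlying A p q" "underlying A q r" "underlying A r t" "underlying A t p"
    unfolding all_less_four by (simp_all add: us)
  moreover have "cycle_sign A us
      = skew_entry A p q * skew_entry A q r * skew_entry A r t * skew_entry A t p"
    by (simp add: cycle_sign_def us lessThan_nat_numeral)
  ultimately show "cycle_sign A us > 0"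
    using assms(2)[of p q r t] \<open>distinct us\<close> by (simp add: us underlying_iff_skew_entry)
qed

lemma evenly_oriented_four_cycle:
  assumes og: "oriented_graph A" and U: "UNIV = {p, q, r, t}" and dist: "distinct [p, q, r, t]"
    and chord: "skew_entry A p r = 0"
    and sign: "skew_entry A p q * skew_entry A q r * skew_entry A r t * skew_entry A t p = 1"
  shows "evenly_oriented A"
proof (rule evenly_orientedI_four_vertices[OF U])
  let ?s = "skew_entry A"
  have anti: "?s y x = - ?s x y" for x y using skew_entry_antisym[OF og] .
  have opposite: "?s x y * ?s y z * ?s z w * ?s w x = 1"
    if "x \<in> {p, r}" "z \<in> {p, r}" "x \<noteq> z" "y \<in> {q, t}" "w \<in> {q, t}" "y \<noteq> w"
    for x y z w
  proof -
    have "?s x y * ?s y z * ?s z w * ?s w x = (?s x y * ?s x w) * (?s z y * ?s z w)"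
      using anti[of y z] anti[of w x] by simp
    also have "\<dots> = (?s p q * ?s p t) * (?s r q * ?s r t)"
      using that by (auto simp: mult_ac)
    also have "\<dots> = 1"
      using sign anti[of p t] anti[of r q] by (simp add: mult_ac)
    finally show ?thesis .
  qed
  fix a b c d
  assume abcd: "distinct [a, b, c, d]" and "?s a b \<noteq> 0" and "?s b c \<noteq> 0" and "?s c d \<noteq> 0"
    and "?s d a \<noteq> 0"
  moreover have "?s r p = 0"
    using chord anti[of p r] by simp
  moreover have "a \<in> {p, q, r, t}" "b \<in> {p, q, r, t}" "c \<in> {p, q, r, t}" "d \<in> {p, q, r, t}"
    using U by blast+
  \<comment> \<open>\<open>p\<close> and \<open>r\<close> are not adjacent, so they are opposite on every 4-cycle.\<close>
  ultimately have "(a \<in> {p, r} \<and> c \<in> {p, r} \<and> b \<in> {q, t} \<and> d \<in> {q, t})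
      \<or> (b \<in> {p, r} \<and> d \<in> {p, r} \<and> c \<in> {q, t} \<and> a \<in> {q, t})"
    using chord dist by auto
  then show "?s a b * ?s b c * ?s c d * ?s d a > 0"
    using opposite[of a c b d] opposite[of b d c a] abcd by (auto simp: mult_ac)
qed

lemma four_cycle_missing_chord_classification:
  assumes og: "oriented_graph A" and U: "UNIV = {p, q, r, t}" and dist: "distinct [p, q, r, t]"
    and chord: "skew_entry A p r = 0"
    and sign: "skew_entry A p q * skew_entry A q r * skew_entry A r t * skew_entry A t p = 1"
  shows "(iso_to (underlying A) 4 (cycle_graph 4) \<and> evenly_oriented A)
    \<or> (iso_to (underlying A) 4 K112 \<and> evenly_oriented A)"
proof -
  have "underlying A p q" "underlying A q r" "underlying A r t" "underlying A t p"
    "\<not> underlying A p r"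
    using sign chord by (auto simp: underlying_iff_skew_entry)
  then have "iso_to (underlying A) 4 (cycle_graph 4) \<or> iso_to (underlying A) 4 K112"
    using four_cycle_iso_C4[OF symp_underlying irreflp_underlying[OF og] U dist]
      four_cycle_with_chord_iso_K112[OF symp_underlying irreflp_underlying[OF og] U dist]
    by blast
  then show ?thesis
    using evenly_oriented_four_cycle[OF og U dist chord sign] by blast
qed

lemma four_cycle_classification:
  assumes og: "oriented_graph A" and U: "UNIV = {p, q, r, t}" and dist: "distinct [p, q, r, t]"
    and chords: "skew_entry A p r * skew_entry A q t = 0"
    and sign: "skew_entry A p q * skew_entry A q r * skew_entry A r t * skew_entry A t p = 1"
  shows "(iso_to (underlying A) 4 (cycle_graph 4) \<and> evenly_oriented A)
    \<or> (iso_to (underlying A) 4 K112 \<and> evenly_oriented A)"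
proof (cases "skew_entry A p r = 0")
  case True
  then show ?thesis
    using four_cycle_missing_chord_classification[OF og U dist _ sign] by blast
next
  case False
  then have "skew_entry A q t = 0" using chords by simp
  moreover have "UNIV = {q, r, t, p}" and "distinct [q, r, t, p]"
    using U dist by auto
  moreover have "skew_entry A q r * skew_entry A r t * skew_entry A t p * skew_entry A p q = 1"
    using sign by (simp add: mult_ac)
  ultimately show ?thesis
    using four_cycle_missing_chord_classification[OF og] by blast
qed

lemma singular_skew_symmetric_pfaffian_eq_0:
  fixes M :: "real^'n^'n"
  assumes skew: "\<And>i j. M $ j $ i = - M $ i $ j"
    and U: "UNIV = {a, b, c, d}" and dist: "distinct [a, b, c, d]"
    and rank: "rank M < CARD('n)"
  shows "M$a$b * M$c$d - M$a$c * M$b$d + M$a$d * M$b$c = 0"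
proof -
  obtain v where "v \<noteq> 0" and Mv: "M *v v = 0"
    using matrix_nonfull_linear_equations_eq[of M] rank by auto
  have diag: "M $ i $ i = 0" for i using skew[of i i] by simp
  have row: "M$x$a * v$a + M$x$b * v$b + M$x$c * v$c + M$x$d * v$d = 0" for x
  proof -
    have "(\<Sum>j\<in>{a, b, c, d}. M $ x $ j * v $ j) = 0"
      using Mv U by (auto simp: matrix_vector_mult_def vec_eq_iff)
    then show ?thesis using dist by (simp add: add.assoc)
  qed
  have rows: "M$a$b * v$b + M$a$c * v$c + M$a$d * v$d = 0"
    "- M$a$b * v$a + M$b$c * v$c + M$b$d * v$d = 0"
    "- M$a$c * v$a - M$b$c * v$b + M$c$d * v$d = 0"
    "- M$a$d * v$a - M$b$d * v$b - M$c$d * v$c = 0"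
    using row[of a] row[of b] row[of c] row[of d] diag
      skew[of a b] skew[of a c] skew[of a d] skew[of b c] skew[of b d] skew[of c d]
    by simp_all
  let ?pf = "M$a$b * M$c$d - M$a$c * M$b$d + M$a$d * M$b$c"
  \<comment> \<open>The dual skew matrix \<open>N\<close> satisfies \<open>N M = pf \<cdot> I\<close>, so \<open>pf \<cdot> v = N (M v) = 0\<close>.\<close>
  have "?pf * v$a = 0" "?pf * v$b = 0" "?pf * v$c = 0" "?pf * v$d = 0"
    using rows by algebra+
  then have "?pf * v $ i = 0" for i
    using U by (metis UNIV_I empty_iff insertE)
  moreover obtain i where "v $ i \<noteq> 0" using \<open>v \<noteq> 0\<close> by (metis vec_eq_iff zero_index)
  ultimately show ?thesis by (metis mult_eq_0_iff)
qed

lemma skew_rank_lt_pfaffian_eq_0: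
  fixes A :: "'n::finite \<Rightarrow> 'n \<Rightarrow> bool"
  assumes og: "oriented_graph A" and U: "UNIV = {a, b, c, d}" and dist: "distinct [a, b, c, d]"
    and "skew_rank A < CARD('n)"
  shows "skew_entry A a b * skew_entry A c d - skew_entry A a c * skew_entry A b d
    + skew_entry A a d * skew_entry A b c = 0"
proof -
  have skew: "skew_adj A $ j $ i = - skew_adj A $ i $ j" for i j
    by (simp add: skew_adj_def skew_entry_antisym[OF og, of i j])
  have rank: "rank (skew_adj A) < CARD('n)"
    using assms(4) by (simp add: skew_rank_def)
  show ?thesis
    using singular_skew_symmetric_pfaffian_eq_0[OF skew U dist rank]
    by (simp add: skew_adj_def)
qed

lemma four_vertex_pfaffian_eq_0_classification:
  assumes og: "oriented_graph A" and nbr: "\<And>x. \<exists>y. underlying A x y"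
    and U: "UNIV = {a, b, c, d}" and dist: "distinct [a, b, c, d]"
    and pf: "skew_entry A a b * skew_entry A c d - skew_entry A a c * skew_entry A b d
      + skew_entry A a d * skew_entry A b c = 0"
  shows "(iso_to (underlying A) 4 (cycle_graph 4) \<and> evenly_oriented A)
    \<or> iso_to (underlying A) 4 star_K13
    \<or> (iso_to (underlying A) 4 K112 \<and> evenly_oriented A)"
proof -
  let ?s = "skew_entry A"
  define m1 m2 m3
    where "m1 = ?s a b * ?s c d" and "m2 = ?s a c * ?s b d" and "m3 = ?s a d * ?s b c"
  have unit: "x \<in> {-1, 0, 1} \<Longrightarrow> y \<in> {-1, 0, 1} \<Longrightarrow> x * y \<in> {-1, 0, 1}" for x y :: real
    by auto
  have "m1 \<in> {-1, 0, 1}" "m2 \<in> {-1, 0, 1}" "m3 \<in> {-1, 0, 1}"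
    unfolding m1_def m2_def m3_def by (intro unit skew_entry_cases)+
  moreover have "m1 - m2 + m3 = 0" using pf by (simp add: m1_def m2_def m3_def)
  ultimately consider "m1 = 0" "m2 = 0" "m3 = 0"
    | "m3 = 0" "m1 * m2 = 1" | "m2 = 0" "- m1 * m3 = 1" | "m1 = 0" "m2 * m3 = 1"
    by fastforce
  then show ?thesis
  proof cases
    case 1
    then have "\<not> (underlying A a b \<and> underlying A c d)"
      "\<not> (underlying A a c \<and> underlying A b d)" "\<not> (underlying A a d \<and> underlying A b c)"
      by (simp_all add: m1_def m2_def m3_def underlying_iff_skew_entry)
    then have "iso_to (underlying A) 4 star_K13"
      by (rule no_perfect_matching_iso_star[OF symp_underlying irreflp_underlying[OF og]
            nbr U dist])
    then show ?thesis by blast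
  next
    case 2
    have "UNIV = {a, b, d, c}" "distinct [a, b, d, c]" using U dist by auto
    moreover have "?s a d * ?s b c = 0" using 2 by (simp add: m3_def)
    moreover have "?s a b * ?s b d * ?s d c * ?s c a = 1"
      using 2 skew_entry_antisym[OF og, of c d] skew_entry_antisym[OF og, of a c]
      by (simp add: m1_def m2_def mult_ac)
    ultimately show ?thesis
      using four_cycle_classification[OF og] by blast
  next
    case 3
    have "?s a c * ?s b d = 0" using 3 by (simp add: m2_def)
    moreover have "?s a b * ?s b c * ?s c d * ?s d a = 1"
      using 3 skew_entry_antisym[OF og, of a d]
      by (simp add: m1_def m3_def mult_ac)
    ultimately show ?thesis
      using four_cycle_classification[OF og U dist] by blast
  next
    case 4
    have "UNIV = {a, c, b, d}" "distinct [a, c, b, d]" using U dist by auto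
    moreover have "?s a b * ?s c d = 0" using 4 by (simp add: m1_def)
    moreover have "?s a c * ?s c b * ?s b d * ?s d a = 1"
      using 4 skew_entry_antisym[OF og, of b c] skew_entry_antisym[OF og, of a d]
      by (simp add: m2_def m3_def mult_ac)
    ultimately show ?thesis
      using four_cycle_classification[OF og] by blast
  qed
qed

theorem theorem3p1:
  fixes A :: "'n::finite \<Rightarrow> 'n \<Rightarrow> bool"
  assumes "oriented_graph A"
    and "connected_graph (underlying A)"
    and "CARD('n) \<in> {2, 3, 4}"
    and "skew_rank A = 2"
  shows "(CARD('n) = 2 \<longrightarrow> iso_to (underlying A) 2 (path_graph 2))
       \<and> (CARD('n) = 3 \<longrightarrow> iso_to (underlying A) 3 (complete_graph 3)
                          \<or> iso_to (underlying A) 3 (path_graph 3))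
       \<and> (CARD('n) = 4 \<longrightarrow>
            (iso_to (underlying A) 4 (cycle_graph 4) \<and> evenly_oriented A)
          \<or> iso_to (underlying A) 4 star_K13
          \<or> (iso_to (underlying A) 4 K112 \<and> evenly_oriented A))"
proof (intro conjI impI)
  have nbr: "\<exists>y. underlying A x y" for x
    using connected_graph_neighbour[OF assms(2)] assms(3) by auto
  note graph = symp_underlying irreflp_underlying[OF assms(1)] nbr
  show "iso_to (underlying A) 2 (path_graph 2)" if "CARD('n) = 2"
    using two_vertex_graph_iso_path[OF graph that] .
  show "iso_to (underlying A) 3 (complete_graph 3) \<or> iso_to (underlying A) 3 (path_graph 3)"
    if "CARD('n) = 3"
    using three_vertex_graph_iso_triangle_or_path[OF graph that] .
  assume four: "CARD('n) = 4"
  then obtain a b c d :: 'n where U: "UNIV = {a, b, c, d}" and dist: "distinct [a, b, c, d]"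
    using card_4_obtain by blast
  moreover have "skew_rank A < CARD('n)"
    using assms(4) four by simp
  ultimately show "(iso_to (underlying A) 4 (cycle_graph 4) \<and> evenly_oriented A)
      \<or> iso_to (underlying A) 4 star_K13
      \<or> (iso_to (underlying A) 4 K112 \<and> evenly_oriented A)"
    using four_vertex_pfaffian_eq_0_classification[OF assms(1) nbr U dist]
      skew_rank_lt_pfaffian_eq_0[OF assms(1) U dist] by blast
qed

end
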